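(* Let $q\ge4$ be even and let $B(n,m)$ be the number of $m$-RLL strings in $\Sigma_q^n$. If $m\ge\lceil\log_{q/2}n\rceil+1$, then $B(n,m)\ge q^n-2q^{n-1}\ge q^n/2$.
   Context: $\Sigma_q=\{0,\dots,q-1\}$, $\boldsymbol{x}_{[a,b]}=x_a\cdots x_b$. The complement on $\Sigma_q$ is $\overline{a}=a+1$ if $a$ is even and $\overline{a}=a-1$ if $a$ is odd (so $\{a,\overline a\}=\{2\lfloor a/2\rfloor,2\lfloor a/2\rfloor+1\}$). In $\boldsymbol{x}\in\Sigma_q^n$, a substring $\boldsymbol{x}_{[i,j]}$ ($i\le j$) is a run if all its entries lie in $\{x_i,\overline{x_i}\}$ and it is maximal, i.e. $x_{i-1}\notin\{x_i,\overline{x_i}\}$ when $i>1$ and $x_{j+1}\notin\{x_i,\overline{x_i}\}$ when $j<n$. A string is $m$-runlength-limited ($m$-RLL) if each of its runs has length at most $m$. *)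

theory Defs
  imports Complex_Main
begin

text \<open>Strings over Sigma_q = {0,...,q-1} are lists; positions are 0-indexed
  (position k of the list is x_{k+1} in the paper).\<close>

definition compl :: "nat \<Rightarrow> nat" where
  "compl a = (if even a then a + 1 else a - 1)"

definition is_run :: "nat list \<Rightarrow> nat \<Rightarrow> nat \<Rightarrow> bool" where
  "is_run x i j \<longleftrightarrow> i \<le> j \<and> j < length x
     \<and> (\<forall>k. i \<le> k \<and> k \<le> j \<longrightarrow> x ! k \<in> {x ! i, compl (x ! i)})
     \<and> (0 < i \<longrightarrow> x ! (i - 1) \<notin> {x ! i, compl (x ! i)})
     \<and> (j + 1 < length x \<longrightarrow> x ! (j + 1) \<notin> {x ! i, compl (x ! i)})"

definition RLL :: "nat \<Rightarrow> nat list \<Rightarrow> bool" where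
  "RLL m x \<longleftrightarrow> (\<forall>i j. is_run x i j \<longrightarrow> j - i + 1 \<le> m)"

definition strings :: "nat \<Rightarrow> nat \<Rightarrow> nat list set" where
  "strings q n = {x. length x = n \<and> set x \<subseteq> {..<q}}"

definition B :: "nat \<Rightarrow> nat \<Rightarrow> nat \<Rightarrow> nat" where
  "B q n m = card {x \<in> strings q n. RLL m x}"

end

theory Submission
  imports Defs
begin

text \<open>A string that is not \<open>m\<close>-RLL has \<open>m + 1\<close> consecutive symbols from a single pair
  \<open>{2a, 2a + 1}\<close>, starting at some position \<open>i < n - m\<close>. For fixed \<open>i\<close> such a string is
  determined by its other \<open>n - m - 1\<close> symbols, the pair index \<open>a < q/2\<close> and the \<open>m + 1\<close>
  parities inside the window. The union bound over \<open>i\<close> leaves at most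
  \<open>(n - m) q^n (2/q)^m \<le> 2 q^(n-1)\<close> bad strings, because the hypothesis on \<open>m\<close> says
  exactly that \<open>n \<le> (q/2)^(m-1)\<close>.\<close>

lemma strings_eq_lists: "strings q n = {xs. set xs \<subseteq> {..<q} \<and> length xs = n}"
  unfolding strings_def by auto

lemma card_strings: "card (strings q n) = q ^ n"
  unfolding strings_eq_lists by (simp add: card_lists_length_eq)

lemma finite_strings: "finite (strings q n)"
  unfolding strings_eq_lists by (simp add: finite_lists_length_eq)

lemma compl_div_2 [simp]: "compl a div 2 = a div 2"
  by (auto simp: compl_def elim!: oddE)

lemma list_eq_by_div_mod_2:
  fixes u v :: "nat list"
  assumes "map (\<lambda>c. c div 2) u = map (\<lambda>c. c div 2) v"
    and "map (\<lambda>c. c mod 2) u = map (\<lambda>c. c mod 2) v"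
  shows "u = v"
  using assms
proof (induction u arbitrary: v)
  case (Cons a u)
  then show ?case by (cases v) (auto, metis div_mult_mod_eq)
qed simp

definition window_in_pair :: "nat \<Rightarrow> nat \<Rightarrow> nat \<Rightarrow> nat \<Rightarrow> nat list set" where
  "window_in_pair q n m i =
     {x \<in> strings q n. \<forall>k \<le> m. x ! (i + k) div 2 = x ! i div 2}"

lemma not_RLL_imp_window_in_pair:
  assumes "x \<in> strings q n" "\<not> RLL m x"
  shows "\<exists>i < n - m. x \<in> window_in_pair q n m i"
proof -
  from assms(2) obtain i j where run: "is_run x i j" and long: "m < j - i + 1"
    unfolding RLL_def by force
  have "length x = n" using assms(1) by (simp add: strings_def)
  then have ij: "i \<le> j" "j < n" using run by (auto simp: is_run_def)
  then have "i < n - m" using long by linarith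
  moreover have "x ! (i + k) div 2 = x ! i div 2" if "k \<le> m" for k
  proof -
    have "i + k \<le> j" using that long ij(1) by linarith
    then have "x ! (i + k) \<in> {x ! i, compl (x ! i)}"
      using run unfolding is_run_def by simp
    then show ?thesis by auto
  qed
  ultimately show ?thesis using assms(1) unfolding window_in_pair_def by blast
qed

lemma window_div_2_replicate:
  assumes "x \<in> window_in_pair q n m i" "i + m < n"
  shows "map (\<lambda>c. c div 2) (take (m + 1) (drop i x)) = replicate (m + 1) (x ! i div 2)"
  using assms
  by (intro nth_equalityI) (auto simp: window_in_pair_def strings_def simp del: replicate_Suc)

lemma card_window_in_pair_le:
  assumes "even q" "i + m < n"
  shows "card (window_in_pair q n m i) \<le> q ^ (n - m - 1) * (q div 2) * 2 ^ (m + 1)"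
proof -
  let ?W = "window_in_pair q n m i"
  let ?T = "strings q (n - m - 1) \<times> {..<q div 2} \<times> strings 2 (m + 1)"
  let ?window = "\<lambda>x. take (m + 1) (drop i x)"
  let ?code = "\<lambda>x. (take i x @ drop (i + m + 1) x, x ! i div 2, map (\<lambda>c. c mod 2) (?window x))"
  have "?code ` ?W \<subseteq> ?T"
  proof (rule image_subsetI)
    fix x assume x: "x \<in> ?W"
    have len: "length x = n" and sym: "set x \<subseteq> {..<q}"
      using x by (auto simp: window_in_pair_def strings_def)
    then have "x ! i < q" using assms(2) by (metis add_lessD1 nth_mem lessThan_iff subsetD)
    then have "x ! i div 2 < q div 2" using assms(1) by (auto elim!: evenE)
    moreover have "set (take i x @ drop (i + m + 1) x) \<subseteq> {..<q}"
      using sym set_take_subset[of i x] set_drop_subset[of "i + m + 1" x] by auto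
    ultimately show "?code x \<in> ?T" using len assms(2) by (auto simp: strings_def)
  qed
  moreover have "inj_on ?code ?W"
  proof (rule inj_onI)
    fix x z assume x: "x \<in> ?W" and z: "z \<in> ?W" and eq: "?code x = ?code z"
    have len: "length x = n" "length z = n" using x z by (auto simp: window_in_pair_def strings_def)
    then have heads: "take i x = take i z" and tails: "drop (i + m + 1) x = drop (i + m + 1) z"
      using eq assms(2) append_eq_append_conv[of "take i x" "take i z"] by auto
    have pair: "x ! i div 2 = z ! i div 2"
      and parities: "map (\<lambda>c. c mod 2) (?window x) = map (\<lambda>c. c mod 2) (?window z)"
      using eq by simp_all
    have window: "?window x = ?window z"
    proof (rule list_eq_by_div_mod_2)
      show "map (\<lambda>c. c div 2) (?window x) = map (\<lambda>c. c div 2) (?window z)"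
        unfolding window_div_2_replicate[OF x assms(2)] window_div_2_replicate[OF z assms(2)] pair ..
    qed (rule parities)
    have decomp: "y = take i y @ ?window y @ drop (i + m + 1) y" for y :: "nat list"
      by (metis append_take_drop_id drop_drop add.commute)
    show "x = z" by (subst (1 2) decomp) (simp only: heads window tails)
  qed
  ultimately have "card ?W \<le> card ?T"
    by (intro card_inj_on_le) (auto simp: finite_strings)
  then show ?thesis by (simp add: card_cartesian_product card_strings)
qed

lemma union_bound_arith:
  fixes h n m :: nat
  assumes "n \<le> h ^ (m - 1)" "m \<ge> 1"
  shows "(n - m) * (2 * h) ^ (n - m - 1) * h * 2 ^ (m + 1) \<le> 2 * (2 * h) ^ (n - 1)"
proof (cases "m < n")
  case True
  then have "n - 1 = (n - m - 1) + m" by simp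
  then have split: "(2 * h) ^ (n - 1) = (2 * h) ^ (n - m - 1) * (2 ^ m * h ^ m)"
    by (simp only: power_add power_mult_distrib)
  have "(n - m) * h \<le> n * h" by simp
  also have "\<dots> \<le> h ^ (m - 1) * h" using assms(1) by simp
  also have "\<dots> = h ^ m" using assms(2) by (simp flip: power_Suc2)
  finally have "(n - m) * h * 2 ^ (m + 1) \<le> 2 * (2 ^ m * h ^ m)" by simp
  then have "(2 * h) ^ (n - m - 1) * ((n - m) * h * 2 ^ (m + 1))
      \<le> (2 * h) ^ (n - m - 1) * (2 * (2 ^ m * h ^ m))"
    by (rule mult_le_mono2)
  then show ?thesis unfolding split by (simp add: ac_simps)
qed simp

lemma card_not_RLL_le:
  assumes "even q" "m \<ge> 1" "n \<le> (q div 2) ^ (m - 1)"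
  shows "card {x \<in> strings q n. \<not> RLL m x} \<le> 2 * q ^ (n - 1)"
proof -
  obtain h where q: "q = 2 * h" using assms(1) by blast
  have "{x \<in> strings q n. \<not> RLL m x} \<subseteq> (\<Union>i<n - m. window_in_pair q n m i)"
    using not_RLL_imp_window_in_pair by blast
  then have "card {x \<in> strings q n. \<not> RLL m x} \<le> card (\<Union>i<n - m. window_in_pair q n m i)"
    by (intro card_mono) (auto simp: window_in_pair_def finite_strings)
  also have "\<dots> \<le> (\<Sum>i<n - m. card (window_in_pair q n m i))"
    by (rule card_UN_le) simp
  also have "\<dots> \<le> (\<Sum>i<n - m. q ^ (n - m - 1) * (q div 2) * 2 ^ (m + 1))"
    by (intro sum_mono card_window_in_pair_le) (auto simp: assms(1))
  also have "\<dots> = (n - m) * (2 * h) ^ (n - m - 1) * h * 2 ^ (m + 1)"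
    using q by simp
  also have "\<dots> \<le> 2 * q ^ (n - 1)"
    using union_bound_arith[of n h m] assms q by simp
  finally show ?thesis .
qed

lemma B_eq_card_not_RLL: "B q n m = q ^ n - card {x \<in> strings q n. \<not> RLL m x}"
proof -
  have "{x \<in> strings q n. RLL m x} = strings q n - {x \<in> strings q n. \<not> RLL m x}"
    by blast
  then show ?thesis
    unfolding B_def by (simp add: card_Diff_subset finite_strings card_strings)
qed

lemma card_not_RLL_le_card: "card {x \<in> strings q n. \<not> RLL m x} \<le> q ^ n"
  unfolding card_strings[symmetric] by (intro card_mono finite_strings) auto

lemma B_ge:
  assumes "even q" "m \<ge> 1" "n \<le> (q div 2) ^ (m - 1)"
  shows "real (B q n m) \<ge> real q ^ n - 2 * real q ^ (n - 1)"
proof -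
  have "card {x \<in> strings q n. \<not> RLL m x} \<le> 2 * q ^ (n - 1)"
    using card_not_RLL_le assms by blast
  then have "real (card {x \<in> strings q n. \<not> RLL m x}) \<le> 2 * real q ^ (n - 1)"
    by (simp flip: of_nat_power)
  then show ?thesis
    unfolding B_eq_card_not_RLL using card_not_RLL_le_card by (simp add: of_nat_diff)
qed

lemma le_power_if_ceiling_log_le:
  fixes b x :: real and k :: nat
  assumes "1 < b" "0 < x" "\<lceil>log b x\<rceil> \<le> int k"
  shows "x \<le> b ^ k"
proof -
  have "log b x \<le> real k" using assms(3) by linarith
  then show ?thesis using assms(1,2) by (simp add: log_le_iff powr_realpow)
qed

theorem lemma11:
  fixes q n m :: nat
  assumes "even q" and "q \<ge> 4" and "n \<ge> 1"
    and "int m \<ge> \<lceil>log (real q / 2) (real n)\<rceil> + 1"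
  shows "real (B q n m) \<ge> real q ^ n - 2 * real q ^ (n - 1)
         \<and> real q ^ n - 2 * real q ^ (n - 1) \<ge> real q ^ n / 2"
proof -
  have half: "real q / 2 = real (q div 2)" using assms(1) by auto
  have base: "1 < real q / 2" using assms(2) by simp
  have "0 \<le> log (real q / 2) (real n)" using zero_le_log_cancel_iff[OF base] assms(3) by simp
  then have "0 \<le> \<lceil>log (real q / 2) (real n)\<rceil>" by simp
  then have m: "m \<ge> 1" "\<lceil>log (real q / 2) (real n)\<rceil> \<le> int (m - 1)" using assms(4) by linarith+
  then have "real n \<le> real (q div 2) ^ (m - 1)"
    using le_power_if_ceiling_log_le[of "real q / 2" "real n" "m - 1"] assms(2,3) half by simp
  then have "n \<le> (q div 2) ^ (m - 1)" by (simp flip: of_nat_power)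
  then have "real (B q n m) \<ge> real q ^ n - 2 * real q ^ (n - 1)"
    using B_ge assms(1) m(1) by blast
  moreover have "real q ^ n = real q * real q ^ (n - 1)"
    using assms(3) by (simp flip: power_Suc)
  moreover have "4 * real q ^ (n - 1) \<le> real q * real q ^ (n - 1)"
    using assms(2) by (intro mult_right_mono) auto
  ultimately show ?thesis by simp
qed

end
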